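(* Let $\mathcal{M}\subset\mathbb{R}^n$ be a locally symmetric $C^2$ submanifold and let $\Sigma_{\mathcal{M}}=\{\sigma\in\Sigma^n:\exists\,\bar x\in\mathcal{M},\ \delta>0$ with $\mathcal{M}\cap B(\bar x,\delta)\subseteq\Delta(\sigma)\}$. Then there exists $\sigma_*\in\Sigma^n$ such that $\Sigma_{\mathcal{M}}=\{\sigma\in\Sigma^n:\sigma\sim\sigma_*\}$. Moreover, if $\mathcal{M}\subseteq\Delta(\bar\sigma)^{\perp\perp}$ for some $\bar\sigma\in\Sigma^n$, then $\sigma_*\precsim\bar\sigma$.
   Context: $\Sigma^n$ permutations of $\mathbb{N}_n$ acting by $(\sigma x)_i=x_{\sigma^{-1}(i)}$; $P(\sigma)$ orbit partition; $P(x)$ partition by equal coordinates; $\Delta(\sigma)=\{x:P(x)=P(\sigma)\}$; $\Delta(\sigma)^{\perp\perp}=\{x:x_i=x_j$ whenever $i,j$ lie in the same set of $P(\sigma)\}$. $\sigma\sim\sigma'$ means $P(\sigma)=P(\sigma')$; $\sigma\precsim\sigma'$ means $P(\sigma')$ refines $P(\sigma)$ (every set of $P(\sigma)$ is a union of sets of $P(\sigma')$). $\mathbb{R}^n_\ge=\{x:x_1\ge\cdots\ge x_n\}$; $B$ open ball. A set $S$ is locally symmetric if $S\cap\mathbb{R}^n_\ge\ne\emptyset$ and each $x\in S$ has $\delta>0$ with $\sigma(S\cap B(x,\delta))=S\cap B(x,\delta)$ for all $y\in S\cap B(x,\delta)$, all $\sigma$ with $\sigma y=y$. A locally symmetric $C^2$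 submanifold is a connected $C^2$ submanifold without boundary which is locally symmetric. *)

theory Defs
  imports "HOL-Analysis.Analysis"
begin

text \<open>Vectors in R^n are modelled as real^'n with a finite linearly ordered index
type 'n (isomorphic to {1..n} with its usual order).  Permutations are
bijections p with p permutes UNIV.\<close>

definition perm_act :: "('n::finite \<Rightarrow> 'n) \<Rightarrow> real^'n \<Rightarrow> real^'n" where
  "perm_act p x = (\<chi> i. x $ (inv p i))"

definition same_orbit :: "('n \<Rightarrow> 'n) \<Rightarrow> 'n \<Rightarrow> 'n \<Rightarrow> bool" where
  "same_orbit p i j \<longleftrightarrow> (\<exists>k::nat. (p ^^ k) i = j)"

definition Delta :: "('n::finite \<Rightarrow> 'n) \<Rightarrow> (real^'n) set" where
  "Delta p = {x. \<forall>i j. (x $ i = x $ j) \<longleftrightarrow> same_orbit p i j}"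

definition Delta_pp :: "('n::finite \<Rightarrow> 'n) \<Rightarrow> (real^'n) set" where
  "Delta_pp p = {x. \<forall>i j. same_orbit p i j \<longrightarrow> x $ i = x $ j}"

definition perm_equiv :: "('n \<Rightarrow> 'n) \<Rightarrow> ('n \<Rightarrow> 'n) \<Rightarrow> bool" where
  "perm_equiv p q \<longleftrightarrow> (\<forall>i j. same_orbit p i j \<longleftrightarrow> same_orbit q i j)"

definition perm_below :: "('n \<Rightarrow> 'n) \<Rightarrow> ('n \<Rightarrow> 'n) \<Rightarrow> bool" where
  "perm_below p q \<longleftrightarrow> (\<forall>i j. same_orbit q i j \<longrightarrow> same_orbit p i j)"

definition dec_cone :: "(real^'n::{finite,linorder}) set" where
  "dec_cone = {x. \<forall>i j. i \<le> j \<longrightarrow> x $ j \<le> x $ i}"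

definition locally_symmetric :: "(real^'n::{finite,linorder}) set \<Rightarrow> bool" where
  "locally_symmetric S \<longleftrightarrow> S \<inter> dec_cone \<noteq> {} \<and>
     (\<forall>x\<in>S. \<exists>\<delta>>0. \<forall>y\<in>S \<inter> ball x \<delta>. \<forall>p. p permutes UNIV \<and> perm_act p y = y \<longrightarrow>
        perm_act p ` (S \<inter> ball x \<delta>) = S \<inter> ball x \<delta>)"

definition C2_on :: "(real^'n::finite) set \<Rightarrow> (real^'n \<Rightarrow> real^'n) \<Rightarrow> bool" where
  "C2_on U f \<longleftrightarrow> (\<exists>f' f''.
     (\<forall>x\<in>U. (f has_derivative blinfun_apply (f' x)) (at x)) \<and>
     (\<forall>x\<in>U. (f' has_derivative blinfun_apply (f'' x)) (at x)) \<and>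
     continuous_on U f'')"

definition C2_submanifold :: "(real^'n::finite) set \<Rightarrow> bool" where
  "C2_submanifold M \<longleftrightarrow> (\<forall>x\<in>M. \<exists>U V \<phi> \<psi> L.
     open U \<and> x \<in> U \<and> open V \<and> subspace L \<and>
     C2_on U \<phi> \<and> C2_on V \<psi> \<and> \<phi> ` U = V \<and>
     (\<forall>u\<in>U. \<psi> (\<phi> u) = u) \<and> (\<forall>v\<in>V. \<phi> (\<psi> v) = v) \<and>
     \<phi> ` (M \<inter> U) = V \<inter> L)"

definition locally_symmetric_C2_submanifold :: "(real^'n::{finite,linorder}) set \<Rightarrow> bool" where
  "locally_symmetric_C2_submanifold M \<longleftrightarrow>
     connected M \<and> C2_submanifold M \<and> locally_symmetric M"

definition Sigma_M :: "(real^'n::finite) set \<Rightarrow> ('n \<Rightarrow> 'n) set" where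
  "Sigma_M M = {p. p permutes UNIV \<and> (\<exists>x\<in>M. \<exists>\<delta>>0. M \<inter> ball x \<delta> \<subseteq> Delta p)}"

end

theory Submission
  imports Defs "HOL-Combinatorics.Orbits"
begin

(*
  Call y \<in> M regular if its coincidence pattern {(i, j). y_i = y_j} is constant on a neighbourhood
  of y in M. Regular points are dense: in any open set, a point of M minimising the number of
  coincidences is regular, since nearby points can only lose coincidences.

  Near any x \<in> M, every regular point y has the pattern "x_i = x_j and w_i = w_j for all w \<in> T_x M".
  If x and T_x M satisfy both, local symmetry lets the transposition (i j) map M near x into M;
  it fixes x and T_x M, so it moves y orthogonally to T_x M, and since M is locally a graph over
  T_x M it does not move y at all. Conversely, if y_i = y_j at a regular y, all curves in M through
  y keep these coordinates equal, hence so do the tangent vectors at y, and by continuity of the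
  chart derivatives also those at x.

  So the pattern of regular points is locally constant and, M being connected, constant. The
  permutation \<sigma>_* whose orbits are its classes has \<Sigma>_M = {\<sigma>. \<sigma> \<sim> \<sigma>_*}, and \<sigma>_* \<precsim> \<sigma>\<^sub>0
  whenever M \<subseteq> \<Delta>(\<sigma>\<^sub>0)^\<perp>\<perp>, because a regular point lies in \<Delta>(\<sigma>\<^sub>0)^\<perp>\<perp>.
*)

section \<open>Permutations with prescribed orbits\<close>

lemma same_orbit_refl: "same_orbit p i i"
  unfolding same_orbit_def by (rule exI[of _ 0]) simp

lemma same_orbit_step:
  assumes "same_orbit p i j" shows "same_orbit p i (p j)"
proof -
  obtain k where "(p ^^ k) i = j" using assms unfolding same_orbit_def by blast
  then show ?thesis unfolding same_orbit_def by (intro exI[of _ "Suc k"]) simp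
qed

lemma same_orbit_iff_in_orbit:
  assumes "permutation p" shows "same_orbit p i j \<longleftrightarrow> j \<in> orbit p i"
  by (auto simp: same_orbit_def orbit_altdef_permutation[OF assms])

lemma same_orbit_sym:
  assumes "permutation p" "same_orbit p i j" shows "same_orbit p j i"
proof -
  have "j \<in> orbit p i" using assms by (simp add: same_orbit_iff_in_orbit)
  then have "i \<in> orbit p j" by (rule orbit_swap[OF permutation_self_in_orbit[OF assms(1)]])
  then show ?thesis using assms(1) by (simp add: same_orbit_iff_in_orbit)
qed

definition class_successor :: "('n::{finite,linorder} \<Rightarrow> 'b) \<Rightarrow> 'n \<Rightarrow> 'n" where
  "class_successor f i =
     (if \<exists>k>i. f k = f i then Min {k. i < k \<and> f k = f i} else Min {k. f k = f i})"

lemma class_successor_same_class: "f (class_successor f i) = f i"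
proof -
  have "Min {k. i < k \<and> f k = f i} \<in> {k. i < k \<and> f k = f i}" if "\<exists>k>i. f k = f i"
    using that by (intro Min_in) auto
  moreover have "Min {k. f k = f i} \<in> {k. f k = f i}" by (intro Min_in) auto
  ultimately show ?thesis by (auto simp: class_successor_def)
qed

lemma class_successor_between:
  assumes "i < c" "f c = f i"
  shows "i < class_successor f i \<and> class_successor f i \<le> c"
proof -
  have "Min {k. i < k \<and> f k = f i} \<in> {k. i < k \<and> f k = f i}"
    using assms by (intro Min_in) auto
  moreover have "Min {k. i < k \<and> f k = f i} \<le> c" using assms by (intro Min_le) auto
  ultimately show ?thesis using assms by (auto simp: class_successor_def)
qed

lemma class_successor_last:
  assumes "\<not> (\<exists>k>i. f k = f i)" "f j = f i"
  shows "class_successor f i \<le> j"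
  using assms by (auto simp: class_successor_def intro: Min_le)

lemma inj_class_successor: "inj (class_successor f)"
proof -
  have neq: "class_successor f a \<noteq> class_successor f b" if "a < b" "f a = f b" for a b
  proof (cases "\<exists>k>b. f k = f b")
    case True
    then obtain c where "b < c" "f c = f b" by blast
    then have "b < class_successor f b" using class_successor_between by blast
    then show ?thesis using that class_successor_between[of a b f] by auto
  next
    case False
    then have "class_successor f b \<le> a" using that class_successor_last[of b f a] by simp
    then show ?thesis using that class_successor_between[of a b f] by auto
  qed
  show ?thesis
  proof (rule injI)
    fix a b assume eq: "class_successor f a = class_successor f b"
    then have "f a = f b" by (metis class_successor_same_class)
    then show "a = b" using eq neq[of a b] neq[of b a] by (cases a b rule: linorder_cases) auto
  qed
qed

lemma class_successor_permutes: "class_successor f permutes UNIV"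
proof -
  have "bij (class_successor f)"
    using inj_class_successor[of f] finite_UNIV_inj_surj[of "class_successor f"] by (simp add: bij_def)
  then show ?thesis by (rule bij_imp_permutes) simp
qed

lemma same_orbit_class_successor_upwards:
  assumes "i \<le> j" "f i = f j"
  shows "same_orbit (class_successor f) i j"
  using assms
proof (induction "card {c. c < j}" arbitrary: j rule: less_induct)
  case less
  show ?case
  proof (cases "i = j")
    case True
    then show ?thesis by (simp add: same_orbit_refl)
  next
    case False
    define S where "S = {c. c < j \<and> f c = f i}"
    define j' where "j' = Max S"
    have j'_max: "c \<le> j'" if "c \<in> S" for c
      unfolding j'_def using that by (intro Max_ge) (simp_all add: S_def)
    have "i \<in> S" using False less.prems by (auto simp: S_def)
    then have "j' \<in> S" unfolding j'_def by (intro Max_in) (auto simp: S_def)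
    then have j': "j' < j" "f j' = f i" "i \<le> j'"
      using j'_max[OF \<open>i \<in> S\<close>] by (auto simp: S_def)
    have "card {c. c < j'} < card {c. c < j}"
      using \<open>j' < j\<close> by (intro psubset_card_mono) auto
    then have IH: "same_orbit (class_successor f) i j'"
      using less.hyps j' by auto
    have between: "j' < class_successor f j' \<and> class_successor f j' \<le> j"
      using class_successor_between[of j' j f] j' less.prems by auto
    have "class_successor f j' = j"
    proof (rule ccontr)
      assume "class_successor f j' \<noteq> j"
      then have "class_successor f j' \<in> S"
        using between class_successor_same_class[of f j'] j' by (auto simp: S_def)
      then show False using j'_max between by force
    qed
    then show ?thesis using same_orbit_step[OF IH] by simp
  qed
qed

lemma same_orbit_class_successor: "same_orbit (class_successor f) i j \<longleftrightarrow> f i = f j"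
proof
  assume "same_orbit (class_successor f) i j"
  then obtain k where k: "(class_successor f ^^ k) i = j" unfolding same_orbit_def by blast
  have "f ((class_successor f ^^ k) i) = f i"
    by (induction k) (simp_all add: class_successor_same_class)
  then show "f i = f j" using k by simp
next
  assume "f i = f j"
  have "permutation (class_successor f)"
    using class_successor_permutes by (rule permutes_imp_permutation[rotated]) simp
  show "same_orbit (class_successor f) i j"
  proof (cases "i \<le> j")
    case True
    then show ?thesis using \<open>f i = f j\<close> by (rule same_orbit_class_successor_upwards)
  next
    case False
    then have "same_orbit (class_successor f) j i"
      using \<open>f i = f j\<close> by (intro same_orbit_class_successor_upwards) auto
    then show ?thesis by (rule same_orbit_sym[OF \<open>permutation (class_successor f)\<close>])
  qed
qed

lemma ex_permutation_orbits_eq_fibres: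
  fixes f :: "'n::{finite,linorder} \<Rightarrow> 'b"
  shows "\<exists>s. s permutes UNIV \<and> (\<forall>i j. same_orbit s i j \<longleftrightarrow> f i = f j)"
  by (intro exI[of _ "class_successor f"]) (simp add: class_successor_permutes same_orbit_class_successor)

section \<open>Coordinate patterns\<close>

lemma perm_act_nth [simp]: "perm_act p x $ i = x $ inv p i"
  by (simp add: perm_act_def)

lemma perm_act_diff: "perm_act p (x - y) = perm_act p x - perm_act p y"
  by (simp add: vec_eq_iff)

lemma inner_perm_act:
  assumes "p permutes UNIV"
  shows "inner (perm_act p x) (perm_act p y) = inner x y"
  unfolding inner_vec_def perm_act_nth
  using sum.permute[OF permutes_inv[OF assms], of "\<lambda>i. inner (x $ i) (y $ i)"]
  by (simp add: comp_def)

lemma norm_perm_act: "p permutes UNIV \<Longrightarrow> norm (perm_act p x) = norm x"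
  by (simp add: norm_eq_sqrt_inner inner_perm_act)

lemma perm_act_transpose_fixed:
  "x $ i = x $ j \<Longrightarrow> perm_act (Transposition.transpose i j) x = x"
  unfolding vec_eq_iff perm_act_nth inv_transpose_eq
  by (metis transpose_apply_first transpose_apply_second transpose_apply_other)

lemma eventually_nhds_coord_neq:
  "\<forall>\<^sub>F y in nhds (x::real^'n::finite). \<forall>i j. x $ i \<noteq> x $ j \<longrightarrow> y $ i \<noteq> y $ j"
proof (intro eventually_all_finite)
  fix i j
  have "((\<lambda>y. y $ i - y $ j) \<longlongrightarrow> x $ i - x $ j) (nhds x)"
    by (intro tendsto_intros filterlim_ident)
  then have "x $ i - x $ j \<noteq> 0 \<longrightarrow> (\<forall>\<^sub>F y in nhds x. y $ i - y $ j \<noteq> 0)"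
    using tendsto_imp_eventually_ne by blast
  then show "\<forall>\<^sub>F y in nhds x. x $ i \<noteq> x $ j \<longrightarrow> y $ i \<noteq> y $ j"
    by (cases "x $ i = x $ j") auto
qed

definition pattern_locally_constant_at :: "(real^'n::finite) set \<Rightarrow> real^'n \<Rightarrow> bool" where
  "pattern_locally_constant_at M y \<longleftrightarrow>
     y \<in> M \<and> (\<exists>\<rho>>0. \<forall>z\<in>M \<inter> ball y \<rho>. \<forall>i j. z $ i = z $ j \<longleftrightarrow> y $ i = y $ j)"

lemma pattern_locally_constant_dense:
  fixes M :: "(real^'n::finite) set"
  assumes "M \<inter> ball x \<rho> \<noteq> {}"
  shows "\<exists>y\<in>ball x \<rho>. pattern_locally_constant_at M y"
proof -
  define E where "E z = {(i, j). (z::real^'n) $ i = z $ j}" for z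
  obtain z0 where "z0 \<in> M \<inter> ball x \<rho>" using assms by blast
  then obtain y where y: "y \<in> M \<inter> ball x \<rho>"
    and y_min: "\<And>z. z \<in> M \<inter> ball x \<rho> \<Longrightarrow> card (E y) \<le> card (E z)"
    using ex_has_least_nat[of "\<lambda>z. z \<in> M \<inter> ball x \<rho>" z0 "\<lambda>z. card (E z)"] by blast
  have "\<forall>\<^sub>F z in nhds y. z \<in> ball x \<rho>"
    using y by (intro eventually_nhds_in_open) auto
  then have "\<forall>\<^sub>F z in nhds y. z \<in> ball x \<rho> \<and> (\<forall>i j. y $ i \<noteq> y $ j \<longrightarrow> z $ i \<noteq> z $ j)"
    using eventually_nhds_coord_neq by (rule eventually_conj)
  then obtain d where "d > 0"
    and d: "\<And>z. dist z y < d \<Longrightarrow> z \<in> ball x \<rho> \<and> (\<forall>i j. y $ i \<noteq> y $ j \<longrightarrow> z $ i \<noteq> z $ j)"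
    unfolding eventually_nhds_metric by blast
  have "E z = E y" if z: "z \<in> M \<inter> ball y d" for z
  proof (rule card_seteq)
    have "dist z y < d" using z by (simp add: dist_commute)
    then show "E z \<subseteq> E y" "card (E y) \<le> card (E z)"
      using d[of z] y_min[of z] z by (auto simp: E_def)
  qed (rule finite)
  then have "\<forall>z\<in>M \<inter> ball y d. \<forall>i j. z $ i = z $ j \<longleftrightarrow> y $ i = y $ j"
    unfolding E_def by (metis (mono_tags, lifting) case_prod_conv mem_Collect_eq)
  then show ?thesis
    using y \<open>d > 0\<close> unfolding pattern_locally_constant_at_def by blast
qed

section \<open>Linearization\<close>

lemma eq_0_if_orthogonal_close:
  fixes w u :: "'a::real_inner"
  assumes "inner w u = 0" "norm (w - u) \<le> c * norm w" "c < 1"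
  shows "w = 0"
proof -
  have "(norm (w - u))\<^sup>2 = (norm w)\<^sup>2 + (norm u)\<^sup>2"
    using norm_add_Pythagorean[of w "- u"] assms(1) by (simp add: orthogonal_def)
  then have "(norm w)\<^sup>2 \<le> (norm (w - u))\<^sup>2" by simp
  then have "norm w \<le> norm (w - u)" by (rule power2_le_imp_le) simp
  with assms(2) have "(1 - c) * norm w \<le> 0" by (simp add: algebra_simps)
  with assms(3) show ?thesis by (simp add: mult_le_0_iff)
qed

lemma has_derivative_left_inverse_apply:
  assumes "open U" "x \<in> U" "\<And>u. u \<in> U \<Longrightarrow> g (f u) = u"
    and "(f has_derivative f') (at x)" "(g has_derivative g') (at (f x))"
  shows "g' (f' w) = w"
proof -
  have "((\<lambda>u. g (f u)) has_derivative (\<lambda>w. g' (f' w))) (at x)"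
    using has_derivative_compose[OF assms(4,5)] .
  moreover have "((\<lambda>u. g (f u)) has_derivative (\<lambda>w. w)) (at x)"
    by (rule has_derivative_transform_within_open[OF has_derivative_ident assms(1,2)])
      (simp add: assms(3))
  ultimately have "(\<lambda>w. g' (f' w)) = (\<lambda>w. w)" by (rule has_derivative_unique)
  then show ?thesis by (rule fun_cong)
qed

lemma linearization_error_near:
  fixes f :: "'a::real_normed_vector \<Rightarrow> 'b::real_normed_vector"
  assumes "open U" "x \<in> U" "\<And>u. u \<in> U \<Longrightarrow> (f has_derivative blinfun_apply (f' u)) (at u)"
    and "isCont f' x" "\<epsilon> > 0"
  shows "\<exists>r>0. ball x r \<subseteq> U \<and>
           (\<forall>y\<in>ball x r. \<forall>z\<in>ball x r. norm (f z - f y - f' x (z - y)) \<le> \<epsilon> * norm (z - y))"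
proof -
  have "\<forall>\<^sub>F u in nhds x. u \<in> U"
    using assms(1,2) by (rule eventually_nhds_in_open)
  moreover have "\<forall>\<^sub>F u in nhds x. norm (f' u - f' x) < \<epsilon>"
    using tendstoD[OF isCont_tendsto_compose[OF assms(4) filterlim_ident] assms(5)]
    by (simp add: dist_norm)
  ultimately have "\<forall>\<^sub>F u in nhds x. u \<in> U \<and> norm (f' u - f' x) < \<epsilon>"
    by (rule eventually_conj)
  then obtain r where "r > 0" and r: "\<And>u. dist u x < r \<Longrightarrow> u \<in> U \<and> norm (f' u - f' x) < \<epsilon>"
    unfolding eventually_nhds_metric by blast
  have "norm (f z - f y - f' x (z - y)) \<le> \<epsilon> * norm (z - y)" if "y \<in> ball x r" "z \<in> ball x r" for y z
  proof -
    have "norm (f z - f y - f' x (z - y)) \<le> norm (z - y) * \<epsilon>"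
    proof (rule differentiable_bound_linearization[where S = "ball x r"])
      fix t :: real assume "t \<in> {0..1}"
      then have "(1 - t) *\<^sub>R y + t *\<^sub>R z \<in> ball x r"
        using convex_ball[of x r] that unfolding convex_alt by auto
      then show "y + t *\<^sub>R (z - y) \<in> ball x r" by (simp add: algebra_simps)
    next
      fix u assume "u \<in> ball x r"
      then have "u \<in> U" using r by (simp add: dist_commute)
      show "(f has_derivative blinfun_apply (f' u)) (at u within ball x r)"
        using assms(3)[OF \<open>u \<in> U\<close>] by (rule has_derivative_at_withinI)
    next
      fix u assume "u \<in> ball x r"
      then have "norm (f' u - f' x) < \<epsilon>" using r by (simp add: dist_commute)
      moreover have "blinfun_apply (f' u) - blinfun_apply (f' x) = blinfun_apply (f' u - f' x)"
        by (simp add: fun_eq_iff blinfun.diff_left)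
      ultimately show "onorm (blinfun_apply (f' u) - blinfun_apply (f' x)) \<le> \<epsilon>"
        by (simp add: norm_blinfun.rep_eq)
    qed (use \<open>r > 0\<close> in simp)
    then show ?thesis by (simp add: mult.commute)
  qed
  moreover have "ball x r \<subseteq> U" using r by (auto simp: dist_commute)
  ultimately show ?thesis using \<open>r > 0\<close> by blast
qed

lemma derivative_coord_eq_if_eventually_coord_eq:
  fixes g :: "'a::real_normed_vector \<Rightarrow> real^'n::finite"
  assumes "(g has_derivative g') (at a)"
    and "\<forall>\<^sub>F t in nhds 0. g (a + t *\<^sub>R v) $ i = g (a + t *\<^sub>R v) $ j"
  shows "g' v $ i = g' v $ j"
proof -
  define h where "h t = g (a + t *\<^sub>R v) $ i - g (a + t *\<^sub>R v) $ j" for t :: real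
  have "((\<lambda>t. a + t *\<^sub>R v) has_derivative (\<lambda>t. t *\<^sub>R v)) (at 0)"
    by (auto intro!: derivative_eq_intros)
  moreover have "(g has_derivative g') (at (a + 0 *\<^sub>R v))" using assms(1) by simp
  ultimately have "((\<lambda>t. g (a + t *\<^sub>R v)) has_derivative (\<lambda>t. g' (t *\<^sub>R v))) (at 0)"
    by (rule has_derivative_compose)
  then have "(h has_derivative (\<lambda>t. g' (t *\<^sub>R v) $ i - g' (t *\<^sub>R v) $ j)) (at 0)"
    unfolding h_def by (intro has_derivative_diff bounded_linear.has_derivative[OF bounded_linear_vec_nth])
  moreover have "(\<lambda>t. g' (t *\<^sub>R v) $ i - g' (t *\<^sub>R v) $ j) = (\<lambda>t. (g' v $ i - g' v $ j) * t)"
    using linear_scale[OF has_derivative_linear[OF assms(1)]] by (simp add: fun_eq_iff algebra_simps)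
  ultimately have "(h has_field_derivative g' v $ i - g' v $ j) (at 0)"
    by (simp add: has_field_derivative_def)
  moreover have "(h has_field_derivative 0) (at 0)"
    using DERIV_cong_ev[of 0 0 h "\<lambda>_. 0" 0 0] assms(2) by (simp add: h_def)
  ultimately show ?thesis using DERIV_unique by fastforce
qed

lemma C2_on_imp_C1_on:
  assumes "C2_on U f"
  shows "\<exists>f'. (\<forall>x\<in>U. (f has_derivative blinfun_apply (f' x)) (at x)) \<and> continuous_on U f'"
proof -
  obtain f' f'' where f': "\<forall>x\<in>U. (f has_derivative blinfun_apply (f' x)) (at x)"
    and f'': "\<forall>x\<in>U. (f' has_derivative blinfun_apply (f'' x)) (at x)"
    using assms unfolding C2_on_def by blast
  have "continuous_on U f'"
  proof (rule has_derivative_continuous_on)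
    fix x assume "x \<in> U"
    then show "(f' has_derivative blinfun_apply (f'' x)) (at x within U)"
      using f'' by (blast intro: has_derivative_at_withinI)
  qed
  with f' show ?thesis by blast
qed

section \<open>Submanifold charts\<close>

locale submanifold_chart =
  fixes M :: "(real^'n::finite) set" and U V :: "(real^'n) set"
    and \<phi> \<psi> :: "real^'n \<Rightarrow> real^'n" and L :: "(real^'n) set"
    and \<phi>' \<psi>' :: "real^'n \<Rightarrow> (real^'n) \<Rightarrow>\<^sub>L (real^'n)"
  assumes open_U: "open U" and open_V: "open V" and subspace_L: "subspace L"
    and \<phi>_deriv: "\<And>u. u \<in> U \<Longrightarrow> (\<phi> has_derivative blinfun_apply (\<phi>' u)) (at u)"
    and \<phi>'_cont: "continuous_on U \<phi>'"
    and \<psi>_deriv: "\<And>v. v \<in> V \<Longrightarrow> (\<psi> has_derivative blinfun_apply (\<psi>' v)) (at v)"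
    and \<psi>'_cont: "continuous_on V \<psi>'"
    and \<phi>_U: "\<phi> ` U = V"
    and \<psi>_\<phi>: "\<And>u. u \<in> U \<Longrightarrow> \<psi> (\<phi> u) = u"
    and \<phi>_\<psi>: "\<And>v. v \<in> V \<Longrightarrow> \<phi> (\<psi> v) = v"
    and chart: "\<phi> ` (M \<inter> U) = V \<inter> L"

lemma C2_submanifold_chart:
  assumes "C2_submanifold M" "x \<in> M"
  obtains U V \<phi> \<psi> L \<phi>' \<psi>' where "submanifold_chart M U V \<phi> \<psi> L \<phi>' \<psi>'" "x \<in> U"
proof -
  obtain U V \<phi> \<psi> L where chart: "open U" "x \<in> U" "open V" "subspace L" "C2_on U \<phi>" "C2_on V \<psi>"
      "\<phi> ` U = V" "\<forall>u\<in>U. \<psi> (\<phi> u) = u" "\<forall>v\<in>V. \<phi> (\<psi> v) = v" "\<phi> ` (M \<inter> U) = V \<inter> L"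
    using bspec[OF assms(1)[unfolded C2_submanifold_def] assms(2)] by (elim exE conjE) blast
  obtain \<phi>' where "\<forall>u\<in>U. (\<phi> has_derivative blinfun_apply (\<phi>' u)) (at u)" "continuous_on U \<phi>'"
    using C2_on_imp_C1_on[OF \<open>C2_on U \<phi>\<close>] by blast
  moreover obtain \<psi>' where "\<forall>v\<in>V. (\<psi> has_derivative blinfun_apply (\<psi>' v)) (at v)"
      "continuous_on V \<psi>'"
    using C2_on_imp_C1_on[OF \<open>C2_on V \<psi>\<close>] by blast
  ultimately have "submanifold_chart M U V \<phi> \<psi> L \<phi>' \<psi>'"
    using chart by unfold_locales simp_all
  then show ?thesis using that \<open>x \<in> U\<close> by blast
qed

context submanifold_chart
begin

definition tangent_space :: "real^'n \<Rightarrow> (real^'n) set" where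
  "tangent_space x = {w. \<phi>' x w \<in> L}"

lemma chart_in_L: "y \<in> M \<Longrightarrow> y \<in> U \<Longrightarrow> \<phi> y \<in> V \<inter> L"
  using chart by blast

lemma chart_inverse_in_M:
  assumes "v \<in> V" "v \<in> L" shows "\<psi> v \<in> M \<inter> U"
proof -
  obtain m where "m \<in> M \<inter> U" "v = \<phi> m" using assms chart by blast
  then show ?thesis using \<psi>_\<phi> by simp
qed

lemma chart_derivative_left_inverse:
  assumes "x \<in> U" shows "\<psi>' (\<phi> x) (\<phi>' x w) = w"
proof (rule has_derivative_left_inverse_apply[of U x \<psi> \<phi> "\<phi>' x" "\<psi>' (\<phi> x)"])
  show "open U" "x \<in> U" by (fact open_U, fact assms)
  show "\<psi> (\<phi> u) = u" if "u \<in> U" for u using that by (rule \<psi>_\<phi>)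
  show "(\<phi> has_derivative blinfun_apply (\<phi>' x)) (at x)" using assms by (rule \<phi>_deriv)
  show "(\<psi> has_derivative blinfun_apply (\<psi>' (\<phi> x))) (at (\<phi> x))"
    using assms \<phi>_U by (intro \<psi>_deriv) blast
qed

lemma chart_derivative_right_inverse:
  assumes "x \<in> U" shows "\<phi>' x (\<psi>' (\<phi> x) l) = l"
proof (rule has_derivative_left_inverse_apply[of V "\<phi> x" \<phi> \<psi> "\<psi>' (\<phi> x)" "\<phi>' x"])
  show "open V" "\<phi> x \<in> V" using open_V assms \<phi>_U by blast+
  show "\<phi> (\<psi> v) = v" if "v \<in> V" for v using that by (rule \<phi>_\<psi>)
  show "(\<psi> has_derivative blinfun_apply (\<psi>' (\<phi> x))) (at (\<phi> x))"
    using \<open>\<phi> x \<in> V\<close> by (rule \<psi>_deriv)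
  show "(\<phi> has_derivative blinfun_apply (\<phi>' x)) (at (\<psi> (\<phi> x)))"
    using \<phi>_deriv assms \<psi>_\<phi> by simp
qed

text \<open>Near \<open>x\<close> the chart is almost linear, so the difference of two nearby points of \<open>M\<close> is
  almost tangent; if it is also orthogonal to the tangent space, it vanishes.\<close>

lemma eq_if_diff_orthogonal_tangent_space:
  assumes "x \<in> U"
  shows "\<exists>r>0. \<forall>y\<in>M \<inter> ball x r. \<forall>z\<in>M \<inter> ball x r.
           (\<forall>t\<in>tangent_space x. inner (z - y) t = 0) \<longrightarrow> z = y"
proof -
  define B where "B = \<psi>' (\<phi> x)"
  define \<epsilon> where "\<epsilon> = 1 / (2 * (norm B + 1))"
  have "norm B + 1 > 0" by (simp add: add_nonneg_pos)
  then have "\<epsilon> > 0" and "norm B * \<epsilon> < 1" by (simp_all add: \<epsilon>_def field_simps)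
  have "isCont \<phi>' x"
    using \<phi>'_cont open_U assms by (simp add: continuous_on_eq_continuous_at)
  then obtain r where "r > 0" "ball x r \<subseteq> U" and lin:
      "\<And>y z. y \<in> ball x r \<Longrightarrow> z \<in> ball x r \<Longrightarrow> norm (\<phi> z - \<phi> y - \<phi>' x (z - y)) \<le> \<epsilon> * norm (z - y)"
    using linearization_error_near[OF open_U assms \<phi>_deriv _ \<open>\<epsilon> > 0\<close>] by blast
  have "z = y" if y: "y \<in> M \<inter> ball x r" and z: "z \<in> M \<inter> ball x r"
    and normal: "\<forall>t\<in>tangent_space x. inner (z - y) t = 0" for y z
  proof -
    define l where "l = \<phi> z - \<phi> y"
    have "l \<in> L"
      unfolding l_def using chart_in_L y z \<open>ball x r \<subseteq> U\<close> subspace_L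
      by (blast intro: subspace_diff)
    then have "B l \<in> tangent_space x"
      by (simp add: tangent_space_def B_def chart_derivative_right_inverse assms)
    then have "inner (z - y) (B l) = 0" using normal by blast
    moreover have "norm ((z - y) - B l) \<le> norm B * \<epsilon> * norm (z - y)"
    proof -
      have "(z - y) - B l = B (\<phi>' x (z - y) - l)"
        by (simp add: B_def blinfun.diff_right chart_derivative_left_inverse assms)
      also have "norm \<dots> \<le> norm B * norm (\<phi> z - \<phi> y - \<phi>' x (z - y))"
        using norm_blinfun[of B "\<phi>' x (z - y) - l"] by (simp add: l_def norm_minus_commute)
      also have "\<dots> \<le> norm B * (\<epsilon> * norm (z - y))"
        using lin y z by (intro mult_left_mono) auto
      finally show ?thesis by (simp add: mult.assoc)
    qed
    ultimately have "z - y = 0"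
      using \<open>norm B * \<epsilon> < 1\<close> by (rule eq_0_if_orthogonal_close)
    then show ?thesis by simp
  qed
  then show ?thesis using \<open>r > 0\<close> by blast
qed

lemma eventually_coord_eq_if_transposition_invariant:
  assumes "x \<in> U" "\<delta> > 0"
    and invariant: "perm_act (Transposition.transpose i j) ` (M \<inter> ball x \<delta>) \<subseteq> M"
    and "x $ i = x $ j" and tangent: "\<forall>w\<in>tangent_space x. w $ i = w $ j"
  shows "\<forall>\<^sub>F y in nhds x. y \<in> M \<longrightarrow> y $ i = y $ j"
proof -
  define \<tau> where "\<tau> = Transposition.transpose i j"
  have \<tau>: "\<tau> permutes UNIV" by (simp add: \<tau>_def permutes_swap_id)
  have \<tau>x: "perm_act \<tau> x = x" using \<open>x $ i = x $ j\<close> by (simp add: \<tau>_def perm_act_transpose_fixed)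
  obtain r where "r > 0" and graph: "\<forall>y\<in>M \<inter> ball x r. \<forall>z\<in>M \<inter> ball x r.
      (\<forall>t\<in>tangent_space x. inner (z - y) t = 0) \<longrightarrow> z = y"
    using eq_if_diff_orthogonal_tangent_space[OF assms(1)] by blast
  have "y $ i = y $ j" if "y \<in> M" "dist y x < min r \<delta>" for y
  proof -
    have "dist (perm_act \<tau> y) x = dist y x"
      using \<tau>x norm_perm_act[OF \<tau>, of "y - x"] by (simp add: dist_norm perm_act_diff)
    moreover have "perm_act \<tau> y \<in> M"
      using invariant that by (auto simp: \<tau>_def dist_commute)
    moreover have "inner (perm_act \<tau> y - y) t = 0" if "t \<in> tangent_space x" for t
    proof -
      have "perm_act \<tau> t = t" using tangent that by (simp add: \<tau>_def perm_act_transpose_fixed)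
      then show ?thesis using inner_perm_act[OF \<tau>, of y t] by (simp add: inner_diff_left)
    qed
    ultimately have "perm_act \<tau> y = y"
      using graph that by (simp add: dist_commute)
    then show ?thesis by (metis \<tau>_def perm_act_nth inv_transpose_eq transpose_apply_first)
  qed
  then show ?thesis
    unfolding eventually_nhds_metric using \<open>r > 0\<close> \<open>\<delta> > 0\<close> by (intro exI[of _ "min r \<delta>"]) auto
qed

lemma tangent_coord_eq_if_pattern_locally_constant:
  assumes "pattern_locally_constant_at M y" "y \<in> U" "y $ i = y $ j" "l \<in> L"
  shows "\<psi>' (\<phi> y) l $ i = \<psi>' (\<phi> y) l $ j"
proof (rule derivative_coord_eq_if_eventually_coord_eq[of \<psi> "\<psi>' (\<phi> y)" "\<phi> y"])
  define a where "a = \<phi> y"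
  have a: "a \<in> V \<inter> L" using assms chart_in_L by (simp add: a_def pattern_locally_constant_at_def)
  show "(\<psi> has_derivative blinfun_apply (\<psi>' (\<phi> y))) (at (\<phi> y))"
    using a by (simp add: a_def \<psi>_deriv)
  obtain \<rho> where "\<rho> > 0" and \<rho>: "\<forall>z\<in>M \<inter> ball y \<rho>. \<forall>i j. z $ i = z $ j \<longleftrightarrow> y $ i = y $ j"
    using assms(1) unfolding pattern_locally_constant_at_def by blast
  \<comment> \<open>The curve \<open>t \<mapsto> \<psi> (a + t l)\<close> runs in \<open>M\<close> near \<open>y\<close>, where coordinates \<open>i\<close> and \<open>j\<close> agree.\<close>
  have curve: "((\<lambda>t. a + t *\<^sub>R l) \<longlongrightarrow> a) (nhds 0)"
    by (auto intro!: tendsto_eq_intros filterlim_ident)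
  moreover have "isCont \<psi> a" using a \<psi>_deriv has_derivative_continuous by blast
  ultimately have "((\<lambda>t. \<psi> (a + t *\<^sub>R l)) \<longlongrightarrow> y) (nhds 0)"
    using isCont_tendsto_compose assms(2) \<psi>_\<phi> by (fastforce simp: a_def)
  then have "\<forall>\<^sub>F t in nhds 0. \<psi> (a + t *\<^sub>R l) \<in> ball y \<rho>"
    using \<open>\<rho> > 0\<close> by (intro topological_tendstoD) auto
  moreover have "\<forall>\<^sub>F t in nhds 0. a + t *\<^sub>R l \<in> V"
    using curve open_V a by (intro topological_tendstoD) auto
  ultimately show "\<forall>\<^sub>F t in nhds 0. \<psi> (\<phi> y + t *\<^sub>R l) $ i = \<psi> (\<phi> y + t *\<^sub>R l) $ j"
  proof eventually_elim
    case (elim t)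
    have "a + t *\<^sub>R l \<in> L" using a assms(4) subspace_L by (blast intro: subspace_add subspace_scale)
    then have "\<psi> (a + t *\<^sub>R l) \<in> M" using elim chart_inverse_in_M by blast
    then show ?case using \<rho> elim assms(3) by (simp add: a_def)
  qed
qed

lemma eventually_tangent_coord_neq:
  assumes "x \<in> U" "v $ i \<noteq> v $ j"
  shows "\<forall>\<^sub>F y in nhds x. \<psi>' (\<phi> y) (\<phi>' x v) $ i \<noteq> \<psi>' (\<phi> y) (\<phi>' x v) $ j"
proof -
  have "\<phi> x \<in> V" using assms \<phi>_U by blast
  then have "isCont \<psi>' (\<phi> x)"
    using \<psi>'_cont open_V by (simp add: continuous_on_eq_continuous_at)
  moreover have "isCont \<phi> x" using assms \<phi>_deriv has_derivative_continuous by blast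
  ultimately have "((\<lambda>y. \<psi>' (\<phi> y)) \<longlongrightarrow> \<psi>' (\<phi> x)) (nhds x)"
    by (intro isCont_tendsto_compose[of _ \<psi>']) (auto intro: isCont_tendsto_compose filterlim_ident)
  then have "((\<lambda>y. \<psi>' (\<phi> y) (\<phi>' x v)) \<longlongrightarrow> \<psi>' (\<phi> x) (\<phi>' x v)) (nhds x)"
    by (intro blinfun.tendsto tendsto_const)
  then have "((\<lambda>y. \<psi>' (\<phi> y) (\<phi>' x v)) \<longlongrightarrow> v) (nhds x)"
    by (simp add: chart_derivative_left_inverse[OF assms(1)])
  then have "((\<lambda>y. \<psi>' (\<phi> y) (\<phi>' x v) $ i - \<psi>' (\<phi> y) (\<phi>' x v) $ j) \<longlongrightarrow> v $ i - v $ j) (nhds x)"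
    by (intro tendsto_intros)
  then have "\<forall>\<^sub>F y in nhds x. \<psi>' (\<phi> y) (\<phi>' x v) $ i - \<psi>' (\<phi> y) (\<phi>' x v) $ j \<noteq> 0"
    using assms(2) by (intro tendsto_imp_eventually_ne) auto
  then show ?thesis by eventually_elim simp
qed

lemma eventually_tangent_coord_neq_all_pairs:
  assumes "x \<in> U"
  shows "\<forall>\<^sub>F y in nhds x. \<forall>i j. (\<exists>v\<in>tangent_space x. v $ i \<noteq> v $ j) \<longrightarrow>
           (\<exists>v\<in>tangent_space x. \<psi>' (\<phi> y) (\<phi>' x v) $ i \<noteq> \<psi>' (\<phi> y) (\<phi>' x v) $ j)"
proof (intro eventually_all_finite)
  fix i j
  show "\<forall>\<^sub>F y in nhds x. (\<exists>v\<in>tangent_space x. v $ i \<noteq> v $ j) \<longrightarrow>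
    (\<exists>v\<in>tangent_space x. \<psi>' (\<phi> y) (\<phi>' x v) $ i \<noteq> \<psi>' (\<phi> y) (\<phi>' x v) $ j)"
  proof (cases "\<exists>v\<in>tangent_space x. v $ i \<noteq> v $ j")
    case True
    then obtain v where v: "v \<in> tangent_space x" "v $ i \<noteq> v $ j" by blast
    have "\<forall>\<^sub>F y in nhds x. \<psi>' (\<phi> y) (\<phi>' x v) $ i \<noteq> \<psi>' (\<phi> y) (\<phi>' x v) $ j"
      using assms v(2) by (rule eventually_tangent_coord_neq)
    then show ?thesis by (rule eventually_mono) (use v(1) in blast)
  qed (intro always_eventually, blast)
qed

lemma eventually_coord_eq_if_transposition_invariant_all_pairs:
  assumes "x \<in> U" "\<delta> > 0"
    and invariant: "\<forall>i j. x $ i = x $ j \<longrightarrow> perm_act (Transposition.transpose i j) ` (M \<inter> ball x \<delta>) \<subseteq> M"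
  shows "\<forall>\<^sub>F y in nhds x. \<forall>i j. x $ i = x $ j \<and> (\<forall>w\<in>tangent_space x. w $ i = w $ j) \<longrightarrow>
           y \<in> M \<longrightarrow> y $ i = y $ j"
proof (intro eventually_all_finite)
  fix i j
  show "\<forall>\<^sub>F y in nhds x. x $ i = x $ j \<and> (\<forall>w\<in>tangent_space x. w $ i = w $ j) \<longrightarrow>
    y \<in> M \<longrightarrow> y $ i = y $ j"
  proof (cases "x $ i = x $ j \<and> (\<forall>w\<in>tangent_space x. w $ i = w $ j)")
    case True
    then have "\<forall>\<^sub>F y in nhds x. y \<in> M \<longrightarrow> y $ i = y $ j"
      using invariant by (intro eventually_coord_eq_if_transposition_invariant[OF assms(1,2)]) simp_all
    then show ?thesis by (rule eventually_mono) simp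
  qed (intro always_eventually, blast)
qed

lemma eventually_pattern_eq_tangent_pattern:
  assumes "x \<in> U" "\<delta> > 0"
    and invariant: "\<forall>i j. x $ i = x $ j \<longrightarrow> perm_act (Transposition.transpose i j) ` (M \<inter> ball x \<delta>) \<subseteq> M"
  shows "\<forall>\<^sub>F y in nhds x. pattern_locally_constant_at M y \<longrightarrow>
           (\<forall>i j. y $ i = y $ j \<longleftrightarrow> x $ i = x $ j \<and> (\<forall>w\<in>tangent_space x. w $ i = w $ j))"
proof -
  let ?R = "\<lambda>i j. x $ i = x $ j \<and> (\<forall>w\<in>tangent_space x. w $ i = w $ j)"
  note eventually_coord_eq_if_transposition_invariant_all_pairs[OF assms]
  moreover note eventually_tangent_coord_neq_all_pairs[OF assms(1)]
  moreover have "\<forall>\<^sub>F y in nhds x. y \<in> U"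
    using open_U assms(1) by (rule eventually_nhds_in_open)
  moreover note eventually_nhds_coord_neq[of x]
  ultimately show ?thesis
  proof eventually_elim
    case (elim y)
    note symmetric = elim(1)[rule_format] and tangent_neq = elim(2)[rule_format]
      and neq = elim(4)[rule_format]
    show ?case
    proof (intro impI allI iffI)
      fix i j assume y: "pattern_locally_constant_at M y" and "y $ i = y $ j"
      then have "x $ i = x $ j" using neq by blast
      moreover have "\<forall>w\<in>tangent_space x. w $ i = w $ j"
      proof (rule ccontr)
        assume "\<not> (\<forall>w\<in>tangent_space x. w $ i = w $ j)"
        then obtain v where "v \<in> tangent_space x" "\<psi>' (\<phi> y) (\<phi>' x v) $ i \<noteq> \<psi>' (\<phi> y) (\<phi>' x v) $ j"
          using tangent_neq by blast
        moreover have "\<phi>' x v \<in> L" using \<open>v \<in> tangent_space x\<close> by (simp add: tangent_space_def)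
        ultimately show False
          using tangent_coord_eq_if_pattern_locally_constant[OF y elim(3) \<open>y $ i = y $ j\<close>] by blast
      qed
      ultimately show "?R i j" by blast
    next
      fix i j assume "pattern_locally_constant_at M y" "?R i j"
      then show "y $ i = y $ j" using symmetric by (simp add: pattern_locally_constant_at_def)
    qed
  qed
qed

end

section \<open>Constancy of the pattern along \<open>M\<close>\<close>

lemma pattern_locally_constant_eq_near:
  fixes M :: "(real^'n::{finite,linorder}) set"
  assumes "C2_submanifold M" "locally_symmetric M" "x \<in> M"
  shows "\<exists>r>0. \<forall>y\<in>ball x r. \<forall>z\<in>ball x r.
           pattern_locally_constant_at M y \<and> pattern_locally_constant_at M z \<longrightarrow>
           (\<forall>i j. y $ i = y $ j \<longleftrightarrow> z $ i = z $ j)"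
proof -
  obtain U V \<phi> \<psi> L \<phi>' \<psi>' where chart: "submanifold_chart M U V \<phi> \<psi> L \<phi>' \<psi>'" "x \<in> U"
    using C2_submanifold_chart[OF assms(1,3)] by blast
  let ?R = "\<lambda>i j. x $ i = x $ j \<and> (\<forall>w\<in>submanifold_chart.tangent_space L \<phi>' x. w $ i = w $ j)"
  obtain \<delta> where "\<delta> > 0" and sym: "\<forall>y\<in>M \<inter> ball x \<delta>. \<forall>p. p permutes UNIV \<and> perm_act p y = y \<longrightarrow>
      perm_act p ` (M \<inter> ball x \<delta>) = M \<inter> ball x \<delta>"
    using assms(2,3) unfolding locally_symmetric_def by blast
  have invariant: "\<forall>i j. x $ i = x $ j \<longrightarrow> perm_act (Transposition.transpose i j) ` (M \<inter> ball x \<delta>) \<subseteq> M"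
    using sym[rule_format, of x "Transposition.transpose _ _"] assms(3) \<open>\<delta> > 0\<close>
    by (simp add: permutes_swap_id perm_act_transpose_fixed)
  have "\<forall>\<^sub>F y in nhds x. pattern_locally_constant_at M y \<longrightarrow> (\<forall>i j. y $ i = y $ j \<longleftrightarrow> ?R i j)"
    using submanifold_chart.eventually_pattern_eq_tangent_pattern[OF chart \<open>\<delta> > 0\<close> invariant] by simp
  then obtain r where "r > 0"
    and r: "\<And>y. dist y x < r \<Longrightarrow> pattern_locally_constant_at M y \<longrightarrow> (\<forall>i j. y $ i = y $ j \<longleftrightarrow> ?R i j)"
    unfolding eventually_nhds_metric by blast
  show ?thesis
    using \<open>r > 0\<close> r by (intro exI[of _ r]) (simp add: dist_commute)
qed

lemma pattern_locally_constant_same_pattern: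
  fixes M :: "(real^'n::{finite,linorder}) set"
  assumes "locally_symmetric_C2_submanifold M"
    and "pattern_locally_constant_at M y" "pattern_locally_constant_at M z"
  shows "y $ i = y $ j \<longleftrightarrow> z $ i = z $ j"
proof -
  have M: "connected M" "C2_submanifold M" "locally_symmetric M"
    using assms(1) by (simp_all add: locally_symmetric_C2_submanifold_def)
  have "\<forall>i j. y $ i = y $ j \<longleftrightarrow> z $ i = z $ j"
  proof (rule connected_equivalence_relation_gen[OF M(1), where P = "pattern_locally_constant_at M"])
    show "y \<in> M" "z \<in> M" using assms(2,3) by (simp_all add: pattern_locally_constant_at_def)
  next
    fix T a assume "openin (top_of_set M) T" "a \<in> T"
    then obtain e where "e > 0" "ball a e \<inter> M \<subseteq> T" "a \<in> M"
      unfolding openin_contains_ball by blast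
    then obtain w where "w \<in> ball a e" "pattern_locally_constant_at M w"
      using pattern_locally_constant_dense[of M a e] by (force simp: dist_commute)
    moreover have "w \<in> M" using \<open>pattern_locally_constant_at M w\<close> by (simp add: pattern_locally_constant_at_def)
    ultimately show "\<exists>w. w \<in> T \<and> pattern_locally_constant_at M w"
      using \<open>ball a e \<inter> M \<subseteq> T\<close> by blast
  next
    fix a assume "a \<in> M"
    then obtain r where "r > 0" and r: "\<forall>y\<in>ball a r. \<forall>z\<in>ball a r.
        pattern_locally_constant_at M y \<and> pattern_locally_constant_at M z \<longrightarrow>
        (\<forall>i j. y $ i = y $ j \<longleftrightarrow> z $ i = z $ j)"
      using pattern_locally_constant_eq_near[OF M(2,3)] by blast
    show "\<exists>T. openin (top_of_set M) T \<and> a \<in> T \<and>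
        (\<forall>y\<in>T. \<forall>z\<in>T. pattern_locally_constant_at M y \<and> pattern_locally_constant_at M z \<longrightarrow>
          (\<forall>i j. y $ i = y $ j \<longleftrightarrow> z $ i = z $ j))"
      using \<open>a \<in> M\<close> \<open>r > 0\<close> r by (intro exI[of _ "M \<inter> ball a r"]) (auto intro: openin_open_Int)
  qed (use assms in auto)
  then show ?thesis by blast
qed

lemma Sigma_M_iff_pattern_locally_constant:
  "p \<in> Sigma_M M \<longleftrightarrow> p permutes UNIV \<and>
     (\<exists>y. pattern_locally_constant_at M y \<and> (\<forall>i j. same_orbit p i j \<longleftrightarrow> y $ i = y $ j))"
proof
  assume "p \<in> Sigma_M M"
  then obtain x \<delta> where "p permutes UNIV" "x \<in> M" "\<delta> > 0" "M \<inter> ball x \<delta> \<subseteq> Delta p"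
    unfolding Sigma_M_def by blast
  moreover from this have "\<forall>i j. same_orbit p i j \<longleftrightarrow> x $ i = x $ j"
    by (auto simp: Delta_def)
  ultimately show "p permutes UNIV \<and>
      (\<exists>y. pattern_locally_constant_at M y \<and> (\<forall>i j. same_orbit p i j \<longleftrightarrow> y $ i = y $ j))"
    unfolding pattern_locally_constant_at_def Delta_def by blast
next
  assume "p permutes UNIV \<and>
      (\<exists>y. pattern_locally_constant_at M y \<and> (\<forall>i j. same_orbit p i j \<longleftrightarrow> y $ i = y $ j))"
  then obtain y \<rho> where "p permutes UNIV" "y \<in> M" "\<rho> > 0"
    "\<forall>z\<in>M \<inter> ball y \<rho>. \<forall>i j. z $ i = z $ j \<longleftrightarrow> y $ i = y $ j"
    "\<forall>i j. same_orbit p i j \<longleftrightarrow> y $ i = y $ j"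
    unfolding pattern_locally_constant_at_def by blast
  then show "p \<in> Sigma_M M"
    unfolding Sigma_M_def Delta_def by blast
qed

theorem lemma3p23:
  fixes M :: "(real^'n::{finite,linorder}) set"
  assumes "locally_symmetric_C2_submanifold M"
  shows "\<exists>s. s permutes (UNIV::'n set) \<and>
           Sigma_M M = {p. p permutes UNIV \<and> perm_equiv p s} \<and>
           (\<forall>sb. sb permutes UNIV \<and> M \<subseteq> Delta_pp sb \<longrightarrow> perm_below s sb)"
proof -
  obtain x where "x \<in> M"
    using assms by (auto simp: locally_symmetric_C2_submanifold_def locally_symmetric_def)
  then have "x \<in> M \<inter> ball x 1" by simp
  then obtain z where z: "pattern_locally_constant_at M z"
    using pattern_locally_constant_dense[of M x 1] by blast
  obtain s where s: "s permutes UNIV" "\<And>i j. same_orbit s i j \<longleftrightarrow> z $ i = z $ j"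
    using ex_permutation_orbits_eq_fibres by blast
  have "(\<exists>y. pattern_locally_constant_at M y \<and> (\<forall>i j. same_orbit p i j \<longleftrightarrow> y $ i = y $ j))
      \<longleftrightarrow> perm_equiv p s" for p
    using pattern_locally_constant_same_pattern[OF assms _ z] z
    unfolding perm_equiv_def s(2) by blast
  then have "Sigma_M M = {p. p permutes UNIV \<and> perm_equiv p s}"
    by (auto simp: Sigma_M_iff_pattern_locally_constant)
  moreover have "perm_below s sb" if "M \<subseteq> Delta_pp sb" for sb
  proof -
    have "z \<in> Delta_pp sb" using that z by (auto simp: pattern_locally_constant_at_def)
    then show ?thesis by (simp add: perm_below_def Delta_pp_def s(2))
  qed
  ultimately show ?thesis using s(1) by blast
qed

end
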